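(* Let $R$ be a field having an element of infinite multiplicative order, and let $L\subseteq R[x]$ be the set of polynomials of degree $1$. Then every $\ell\in L$ is $2$-connected with $x$ through $L$, and consequently any two elements of $L$ are $4$-connected through $L$.
   Context: For a ring $S$ and $\ell,\ell'\in S$, $\ell\sim\ell'$ (1-connected) means: for all positive integers $m,n$ with $(\ell-\ell')\mid(\ell^m-(\ell')^n)$ we have $m=n$ (this relation is symmetric). $\ell$ and $\ell'$ are $k$-connected through a subset $T\subseteq S$ if there are $l_0,\dots,l_k\in S$ with $l_0=\ell$, $l_k=\ell'$, $l_1,\dots,l_{k-1}\in T$, and $l_{i-1}\sim l_i$ for $i=1,\dots,k$. *)

theory Defs
  imports "HOL-Computational_Algebra.Polynomial"
begin

definition one_connected :: "'a::comm_ring_1 \<Rightarrow> 'a \<Rightarrow> bool" where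
  "one_connected l l' \<longleftrightarrow>
     (\<forall>m n::nat. 0 < m \<longrightarrow> 0 < n \<longrightarrow> (l - l') dvd (l ^ m - l' ^ n) \<longrightarrow> m = n)"

definition k_connected_through :: "nat \<Rightarrow> 'a::comm_ring_1 set \<Rightarrow> 'a \<Rightarrow> 'a \<Rightarrow> bool" where
  "k_connected_through k T l l' \<longleftrightarrow>
     (\<exists>c :: nat \<Rightarrow> 'a. c 0 = l \<and> c k = l' \<and> (\<forall>i. 0 < i \<and> i < k \<longrightarrow> c i \<in> T) \<and>
        (\<forall>i. 1 \<le> i \<and> i \<le> k \<longrightarrow> one_connected (c (i - 1)) (c i)))"

end

theory Submission
  imports Defs
begin

text \<open>If \<open>a\<close> has infinite multiplicative order, two polynomials taking the common value \<open>a\<close> at a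
  common point are 1-connected: evaluating \<open>(p - q) dvd (p ^ m - q ^ n)\<close> there gives
  \<open>a ^ m = a ^ n\<close>, hence \<open>m = n\<close>. A line \<open>\<ell>\<close> takes the value \<open>a\<close> at some point \<open>s\<close>; choosing
  \<open>r \<in> {a\<^sup>2, a\<^sup>3}\<close> with \<open>r \<noteq> s\<close>, the line through \<open>(s, a)\<close> and \<open>(r, r)\<close> is 1-connected both to \<open>\<ell>\<close>
  and to \<open>x\<close>. Concatenating such a chain with the reversed chain of another line gives 4-connectedness.\<close>

definition infinite_order :: "'a::idom \<Rightarrow> bool" where
  "infinite_order a \<longleftrightarrow> a \<noteq> 0 \<and> (\<forall>n::nat. 0 < n \<longrightarrow> a ^ n \<noteq> 1)"

lemma infinite_order_power:
  assumes "infinite_order a" "0 < k"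
  shows "infinite_order (a ^ k)"
  using assms by (auto simp: infinite_order_def power_mult[symmetric])

lemma infinite_order_power_eq_iff:
  assumes "infinite_order a"
  shows "a ^ m = a ^ n \<longleftrightarrow> m = n"
proof
  have cancel: "m' = n'" if "m' \<le> n'" "a ^ m' = a ^ n'" for m' n'
  proof -
    have "a ^ m' * a ^ (n' - m') = a ^ m' * 1"
      using that by (metis le_add_diff_inverse mult_1_right power_add)
    then have "a ^ (n' - m') = 1"
      using assms by (simp add: infinite_order_def)
    then have "\<not> 0 < n' - m'"
      using assms by (auto simp: infinite_order_def)
    then show "m' = n'"
      using that(1) by simp
  qed
  show "m = n" if "a ^ m = a ^ n"
    using cancel[of m n] cancel[of n m] that by (cases "m \<le> n") auto
qed simp

lemma one_connected_sym:
  fixes l l' :: "'a::comm_ring_1"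
  assumes "one_connected l l'"
  shows "one_connected l' l"
  unfolding one_connected_def
proof (intro allI impI)
  fix m n :: nat
  assume "0 < m" "0 < n" "(l' - l) dvd (l' ^ m - l ^ n)"
  then have "(l - l') dvd (l ^ n - l' ^ m)"
    by (metis dvd_minus_iff minus_diff_eq minus_dvd_iff)
  with assms \<open>0 < m\<close> \<open>0 < n\<close> show "m = n"
    unfolding one_connected_def by blast
qed

lemma one_connected_if_poly_eq:
  fixes p q :: "'a::idom poly"
  assumes "poly p r = a" "poly q r = a" "infinite_order a"
  shows "one_connected p q"
  unfolding one_connected_def
proof (intro allI impI)
  fix m n :: nat
  assume "(p - q) dvd (p ^ m - q ^ n)"
  then obtain g where "p ^ m - q ^ n = (p - q) * g" ..
  then have "poly (p ^ m - q ^ n) r = 0"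
    using assms(1,2) by simp
  then have "a ^ m = a ^ n"
    using assms(1,2) by (simp add: poly_power)
  then show "m = n"
    using infinite_order_power_eq_iff[OF assms(3)] by blast
qed

lemma degree_one_poly_surj:
  fixes l :: "'a::field poly" and a :: 'a
  assumes "degree l = 1"
  shows "\<exists>s. poly l s = a"
proof -
  obtain b c where "l = [:b, c:]" "c \<noteq> 0"
    using degree1_coeffs[OF assms] .
  then have "poly l ((a - b) / c) = a"
    by simp
  then show ?thesis ..
qed

lemma exists_degree_one_poly_through:
  fixes s r u v :: "'a::field"
  assumes "s \<noteq> r" "u \<noteq> v"
  shows "\<exists>m. degree m = 1 \<and> poly m s = u \<and> poly m r = v"
proof -
  define c where "c = (v - u) / (r - s)"
  have "c \<noteq> 0" "c * (r - s) = v - u"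
    using assms by (simp_all add: c_def)
  then have "degree [:u - c * s, c:] = 1 \<and> poly [:u - c * s, c:] s = u
      \<and> poly [:u - c * s, c:] r = v"
    by (simp add: algebra_simps)
  then show ?thesis ..
qed

lemma exists_degree_one_one_connected_to_x:
  fixes l :: "'a::field poly" and a :: 'a
  assumes "infinite_order a" "degree l = 1"
  shows "\<exists>m. degree m = 1 \<and> one_connected l m \<and> one_connected m [:0, 1:]"
proof -
  obtain s where s: "poly l s = a"
    using degree_one_poly_surj[OF assms(2)] ..
  have "a ^ 2 \<noteq> a ^ 3" "a ^ 2 \<noteq> a ^ 1" "a ^ 3 \<noteq> a ^ 1"
    by (simp_all only: infinite_order_power_eq_iff[OF assms(1)])
  moreover have "infinite_order (a ^ 2)" "infinite_order (a ^ 3)"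
    using infinite_order_power[OF assms(1)] by simp_all
  moreover obtain r where "r \<in> {a ^ 2, a ^ 3}" "r \<noteq> s"
    using \<open>a ^ 2 \<noteq> a ^ 3\<close> by blast
  ultimately have r: "r \<noteq> s" "r \<noteq> a" "infinite_order r"
    by auto
  obtain m where m: "degree m = 1" "poly m s = a" "poly m r = r"
    using exists_degree_one_poly_through[OF r(1)[symmetric] r(2)[symmetric]] by blast
  have "one_connected l m"
    using one_connected_if_poly_eq[OF s m(2) assms(1)] .
  moreover have "one_connected m [:0, 1:]"
    using one_connected_if_poly_eq[OF m(3) _ r(3)] by simp
  ultimately show ?thesis
    using m(1) by blast
qed

lemma k_connected_through_one:
  "one_connected l l' \<Longrightarrow> k_connected_through 1 T l l'"
  unfolding k_connected_through_def
  by (rule exI[of _ "\<lambda>i. if i = 0 then l else l'"]) auto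

lemma k_connected_through_sym:
  assumes "k_connected_through k T l l'"
  shows "k_connected_through k T l' l"
proof -
  obtain c where c: "c 0 = l" "c k = l'" "\<And>i. 0 < i \<and> i < k \<Longrightarrow> c i \<in> T"
    "\<And>i. 1 \<le> i \<and> i \<le> k \<Longrightarrow> one_connected (c (i - 1)) (c i)"
    using assms unfolding k_connected_through_def by blast
  have "one_connected (c (k - (i - 1))) (c (k - i))" if "1 \<le> i \<and> i \<le> k" for i
    using c(4)[of "k - i + 1"] that by (auto intro: one_connected_sym simp: Suc_diff_le)
  moreover have "c (k - i) \<in> T" if "0 < i \<and> i < k" for i
    using c(3)[of "k - i"] that by simp
  ultimately show ?thesis
    unfolding k_connected_through_def using c(1,2)
    by (intro exI[of _ "\<lambda>i. c (k - i)"]) auto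
qed

lemma k_connected_through_trans:
  assumes "k_connected_through k T l l'" "k_connected_through j T l' l''" "l' \<in> T"
  shows "k_connected_through (k + j) T l l''"
proof -
  obtain c where c: "c 0 = l" "c k = l'" "\<And>i. 0 < i \<and> i < k \<Longrightarrow> c i \<in> T"
    "\<And>i. 1 \<le> i \<and> i \<le> k \<Longrightarrow> one_connected (c (i - 1)) (c i)"
    using assms(1) unfolding k_connected_through_def by blast
  obtain d where d: "d 0 = l'" "d j = l''" "\<And>i. 0 < i \<and> i < j \<Longrightarrow> d i \<in> T"
    "\<And>i. 1 \<le> i \<and> i \<le> j \<Longrightarrow> one_connected (d (i - 1)) (d i)"
    using assms(2) unfolding k_connected_through_def by blast
  define e where "e i = (if i \<le> k then c i else d (i - k))" for i
  have "e (k + j) = l''"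
    using c(2) d by (cases j) (auto simp: e_def)
  moreover have "e i \<in> T" if "0 < i \<and> i < k + j" for i
    using that c(2,3) d(3)[of "i - k"] assms(3) by (cases "i < k") (auto simp: e_def)
  moreover have "one_connected (e (i - 1)) (e i)" if "1 \<le> i \<and> i \<le> k + j" for i
  proof (cases "i \<le> k")
    case True
    then show ?thesis
      using that c(4) by (auto simp: e_def)
  next
    case False
    then have "e (i - 1) = d (i - k - 1)"
      using c(2) d(1) by (cases "i = Suc k") (auto simp: e_def)
    moreover have "1 \<le> i - k \<and> i - k \<le> j"
      using False that by linarith
    ultimately show ?thesis
      using False d(4)[of "i - k"] by (simp add: e_def)
  qed
  ultimately show ?thesis
    unfolding k_connected_through_def using c(1)
    by (intro exI[of _ e]) (auto simp: e_def)
qed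

theorem theorem2p9:
  fixes L :: "'a::field poly set"
  assumes inf_order: "\<exists>a::'a. a \<noteq> 0 \<and> (\<forall>n::nat. 0 < n \<longrightarrow> a ^ n \<noteq> 1)"
    and L_def: "L = {p. degree p = 1}"
  shows "(\<forall>l\<in>L. k_connected_through 2 L l [:0, 1:]) \<and>
         (\<forall>l\<in>L. \<forall>l'\<in>L. k_connected_through 4 L l l')"
proof -
  obtain a :: 'a where a: "infinite_order a"
    using inf_order by (auto simp: infinite_order_def)
  have to_x: "k_connected_through 2 L l [:0, 1:]" if "l \<in> L" for l
  proof -
    obtain m where "m \<in> L" "one_connected l m" "one_connected m [:0, 1:]"
      using exists_degree_one_one_connected_to_x[OF a] \<open>l \<in> L\<close> L_def by blast
    then show ?thesis
      using k_connected_through_trans[OF k_connected_through_one k_connected_through_one]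
      by (metis one_add_one)
  qed
  have "k_connected_through (2 + 2) L l l'" if "l \<in> L" "l' \<in> L" for l l'
    using k_connected_through_trans[OF to_x k_connected_through_sym[OF to_x]] that L_def
    by simp
  then show ?thesis
    using to_x by simp
qed

end
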